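(* Let $\mathcal{Y}=\{\boldsymbol{x}_1,\dots,\boldsymbol{x}_m\}$ be a finite subset of the unit ball $B_n(1)=\{\boldsymbol{x}\in\mathbb{R}^n:\|\boldsymbol{x}\|\le1\}$ with $\|\boldsymbol{x}_i\|\ge1-\varepsilon$ for all $i$, where $\varepsilon\in(0,1)$. Let $\beta_1,\beta_2\in\mathbb{R}$ satisfy $$\beta_2(m-1)\le\sum_{j\in\{1,\dots,m\},\,j\ne i}\langle\boldsymbol{x}_i,\boldsymbol{x}_j\rangle\le\beta_1(m-1)\quad\text{for all }i=1,\dots,m,$$ and $$(1-\varepsilon)^2+\beta_2(m-1)>0,\qquad 1+(m-1)\beta_1>0.$$ Let $\bar{\boldsymbol{y}}=\frac1m\sum_{i=1}^m\boldsymbol{x}_i$ and $$\ell(\boldsymbol{x})=\Big\langle\frac{\bar{\boldsymbol{y}}}{\|\bar{\boldsymbol{y}}\|},\boldsymbol{x}\Big\rangle-\frac1{\sqrt m}\Big(\frac{(1-\varepsilon)^2+\beta_2(m-1)}{\sqrt{1+(m-1)\beta_1}}\Big).$$ Then $\ell(\boldsymbol{x}_i)\ge0$ for all $\boldsymbol{x}_i\in\mathcal{Y}$.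
   Context: $\langle\cdot,\cdot\rangle$ and $\|\cdot\|$ denote the Euclidean inner product and norm on $\mathbb{R}^n$. *)

theory Defs
  imports "HOL-Analysis.Analysis"
begin

end

theory Submission
  imports Defs
begin

text \<open>With \<open>S = x\<^sub>1 + \<dots> + x\<^sub>m\<close>, the inner product \<open>\<langle>x\<^sub>i, S\<rangle>\<close> is \<open>\<parallel>x\<^sub>i\<parallel>\<^sup>2\<close> plus the sum
  of the other inner products of \<open>x\<^sub>i\<close>, so it lies between \<open>(1 - \<epsilon>)\<^sup>2 + \<beta>\<^sub>2(m - 1)\<close> and
  \<open>1 + (m - 1)\<beta>\<^sub>1\<close>. Summing the upper bound over \<open>i\<close> gives
  \<open>\<parallel>S\<parallel>\<^sup>2 = \<Sum>\<^sub>i \<langle>x\<^sub>i, S\<rangle> \<le> m (1 + (m - 1)\<beta>\<^sub>1)\<close>, and dividing the lower bound by this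
  estimate of \<open>\<parallel>S\<parallel>\<close> bounds \<open>\<langle>S/\<parallel>S\<parallel>, x\<^sub>i\<rangle>\<close> from below. The direction of \<open>\<bar>y\<close> is that
  of \<open>S\<close>.\<close>

lemma inner_sum_right_split:
  fixes x :: "'b \<Rightarrow> 'a::real_inner"
  assumes "finite I" "i \<in> I"
  shows "inner (x i) (sum x I) = (norm (x i))\<^sup>2 + (\<Sum>j\<in>I - {i}. inner (x i) (x j))"
proof -
  have "inner (x i) (sum x I) = (\<Sum>j\<in>I. inner (x i) (x j))"
    by (simp add: inner_sum_right)
  also have "\<dots> = inner (x i) (x i) + (\<Sum>j\<in>I - {i}. inner (x i) (x j))"
    using assms by (simp add: sum.remove)
  finally show ?thesis
    by (simp add: power2_norm_eq_inner)
qed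

lemma norm_sum_squared_le:
  fixes x :: "'b \<Rightarrow> 'a::real_inner"
  assumes "\<And>k. k \<in> I \<Longrightarrow> inner (x k) (sum x I) \<le> B"
  shows "(norm (sum x I))\<^sup>2 \<le> real (card I) * B"
proof -
  have "(norm (sum x I))\<^sup>2 = (\<Sum>k\<in>I. inner (x k) (sum x I))"
    by (simp add: power2_norm_eq_inner inner_sum_left)
  also have "\<dots> \<le> (\<Sum>k\<in>I. B)"
    using assms by (rule sum_mono)
  finally show ?thesis
    by simp
qed

lemma inner_sgn_ge_divide:
  fixes v s :: "'a::real_inner"
  assumes "0 < a" "a \<le> inner v s" "norm s \<le> c"
  shows "a / c \<le> inner (sgn s) v"
proof -
  have "s \<noteq> 0"
    using assms by auto
  then have "0 < norm s"
    by simp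
  then have "0 < c"
    using assms by linarith
  have "a / c \<le> a / norm s"
    using assms \<open>0 < norm s\<close> \<open>0 < c\<close> by (intro divide_left_mono) auto
  also have "\<dots> \<le> inner v s / norm s"
    using assms \<open>0 < norm s\<close> by (intro divide_right_mono) auto
  also have "\<dots> = inner (sgn s) v"
    by (simp add: sgn_div_norm inner_commute divide_inverse)
  finally show ?thesis .
qed

theorem lemma4:
  fixes x :: "nat \<Rightarrow> 'a::euclidean_space"
    and m :: nat and \<epsilon> \<beta>1 \<beta>2 :: real
  assumes distinct: "inj_on x {1..m}"
    and in_ball: "\<forall>i\<in>{1..m}. norm (x i) \<le> 1"
    and eps: "0 < \<epsilon>" "\<epsilon> < 1"
    and near_sphere: "\<forall>i\<in>{1..m}. norm (x i) \<ge> 1 - \<epsilon>"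
    and inner_bounds: "\<forall>i\<in>{1..m}.
        \<beta>2 * (real m - 1) \<le> (\<Sum>j\<in>{1..m} - {i}. inner (x i) (x j)) \<and>
        (\<Sum>j\<in>{1..m} - {i}. inner (x i) (x j)) \<le> \<beta>1 * (real m - 1)"
    and pos2: "(1 - \<epsilon>)\<^sup>2 + \<beta>2 * (real m - 1) > 0"
    and pos1: "1 + (real m - 1) * \<beta>1 > 0"
  shows "\<forall>i\<in>{1..m}.
    (let ybar = (1 / real m) *\<^sub>R (\<Sum>k\<in>{1..m}. x k);
         ell = (\<lambda>z. inner ((1 / norm ybar) *\<^sub>R ybar) z
               - (1 / sqrt (real m)) * (((1 - \<epsilon>)\<^sup>2 + \<beta>2 * (real m - 1))
                                        / sqrt (1 + (real m - 1) * \<beta>1)))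
     in ell (x i) \<ge> 0)"
proof
  fix i assume i: "i \<in> {1..m}"
  define S where "S = (\<Sum>k\<in>{1..m}. x k)"
  define A where "A = (1 - \<epsilon>)\<^sup>2 + \<beta>2 * (real m - 1)"
  define B where "B = 1 + (real m - 1) * \<beta>1"
  have lower: "A \<le> inner (x i) S"
  proof -
    have "(1 - \<epsilon>)\<^sup>2 \<le> (norm (x i))\<^sup>2"
      using near_sphere i eps by (intro power_mono) auto
    then show ?thesis
      using inner_sum_right_split[of "{1..m}" i x] inner_bounds i by (force simp: A_def S_def)
  qed
  have upper: "inner (x k) S \<le> B" if "k \<in> {1..m}" for k
  proof -
    have "(norm (x k))\<^sup>2 \<le> 1"
      using in_ball that by (simp add: power_le_one)
    then show ?thesis
      using inner_sum_right_split[of "{1..m}" k x] inner_bounds that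
      by (force simp: B_def S_def mult.commute)
  qed
  have "norm S \<le> sqrt (real m * B)"
    using norm_sum_squared_le[of "{1..m}" x B] upper by (simp add: S_def real_le_rsqrt)
  then have bound: "A / (sqrt (real m) * sqrt B) \<le> inner (sgn S) (x i)"
    using inner_sgn_ge_divide[OF _ lower] pos2 by (simp add: A_def real_sqrt_mult)
  have direction: "(1 / norm ((1 / real m) *\<^sub>R S)) *\<^sub>R ((1 / real m) *\<^sub>R S) = sgn S"
    using i by (simp add: sgn_div_norm divide_inverse)
  show "let ybar = (1 / real m) *\<^sub>R (\<Sum>k\<in>{1..m}. x k);
         ell = (\<lambda>z. inner ((1 / norm ybar) *\<^sub>R ybar) z
               - (1 / sqrt (real m)) * (((1 - \<epsilon>)\<^sup>2 + \<beta>2 * (real m - 1))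
                                        / sqrt (1 + (real m - 1) * \<beta>1)))
     in ell (x i) \<ge> 0"
    unfolding Let_def S_def[symmetric] direction
    using bound by (simp add: A_def B_def field_simps)
qed

end
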